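(* Let $x,y\in R=\mathbb{K}[[t]]$ with $v(x)=5$, $v(y)=8$, chosen so that $t=y^2/x^3$, and put $z=y/x$. Let $S_2=\langle 1,x,y,x^2,tx^2\rangle+t^{13}R$. For $\alpha,\beta\in\mathbb{K}$ with $\alpha\neq 0$ let $F_9(\alpha,\beta)=\langle 1,\ z+\alpha t z^2+\beta z^3,\ x,\ y\rangle + t^{10}R$. Then each $F_9(\alpha,\beta)$ is an $S_2$-submodule of $R$, and $F_9(\alpha,\beta)\cong F_9(\alpha',\beta')$ as $S_2$-modules (with $\alpha,\alpha'\ne0$) only if $(\alpha,\beta)=(\alpha',\beta')$.
   Context: $\mathbb{K}$ is an algebraically closed field; $v$ denotes the $t$-adic valuation on $R=\mathbb{K}[[t]]$; $\langle a_1,\dots,a_m\rangle$ denotes the $\mathbb{K}$-linear span of $a_1,\dots,a_m$. *)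

theory Defs
  imports "HOL-Computational_Algebra.Computational_Algebra"
begin

text \<open>R = K[[t]] is rendered as the type 'a fps; t is fps_X; v is subdegree (on nonzero elements).\<close>

definition kspan :: "'a::field fps list \<Rightarrow> 'a fps set" where
  "kspan as = {(\<Sum>i<length as. fps_const (c i) * as ! i) | c. True}"

definition tpowR :: "nat \<Rightarrow> 'a::field fps set" where
  "tpowR n = {fps_X ^ n * r | r. True}"

definition setplus :: "'a::field fps set \<Rightarrow> 'a fps set \<Rightarrow> 'a fps set" where
  "setplus A B = {a + b | a b. a \<in> A \<and> b \<in> B}"

definition S2 :: "'a::field fps \<Rightarrow> 'a fps \<Rightarrow> 'a fps set" where
  "S2 x y = setplus (kspan [1, x, y, x^2, fps_X * x^2]) (tpowR 13)"

definition F9 :: "'a::field fps \<Rightarrow> 'a fps \<Rightarrow> 'a fps \<Rightarrow> 'a \<Rightarrow> 'a \<Rightarrow> 'a fps set" where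
  "F9 x y z \<alpha> \<beta> = setplus
     (kspan [1, z + fps_const \<alpha> * fps_X * z^2 + fps_const \<beta> * z^3, x, y]) (tpowR 10)"

definition is_submodule :: "'a::field fps set \<Rightarrow> 'a fps set \<Rightarrow> bool" where
  "is_submodule S M \<longleftrightarrow> 0 \<in> M \<and> (\<forall>a\<in>M. \<forall>b\<in>M. a + b \<in> M) \<and> (\<forall>a\<in>M. - a \<in> M)
     \<and> (\<forall>s\<in>S. \<forall>a\<in>M. s * a \<in> M)"

definition module_iso :: "'a::field fps set \<Rightarrow> 'a fps set \<Rightarrow> 'a fps set \<Rightarrow> bool" where
  "module_iso S M N \<longleftrightarrow> (\<exists>\<phi>. bij_betw \<phi> M N \<and> (\<forall>a\<in>M. \<forall>b\<in>M. \<phi> (a + b) = \<phi> a + \<phi> b)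
     \<and> (\<forall>s\<in>S. \<forall>a\<in>M. \<phi> (s * a) = s * \<phi> a))"

end

theory Submission
  imports Defs
begin

(* The relation y^2 = t x^3 together with z x = y forces z^2 = t x, so z = t^3 c
   for a unit c of R, and then x = t^5 c^2, y = t^8 c^3 (cusp_normal_form).  Every module
   in sight has the shape  <h_1,...,h_m> + t^n R  (gen_module), and we first develop the
   general facts about such modules: they are K-subspaces, and  <hs> + t^n R  is a module
   over  <gs> + t^k R  as soon as n <= k and all products g*h of generators lie in it
   (gen_module_submodule).  For F9 this product check reduces to  x*w in y + t^10 R, where
   w = z + a t z^2 + b z^3, all other products having order >= 10 (F9_submodule).
   For the uniqueness, an S2-linear bijection between modules containing 1 is multiplication
   by a unit u = phi(1), because t^13 R lies in S2 (iso_is_multiplication_by_unit).  Writing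
   u in the generators of F9(a',b') and comparing  w u  with the generators of F9(a',b')
   leaves a combination of t^6 c^2, t^7 c^2, t^9 c^3 that must lie in F9(a',b'); the orders
   0,3,5,8 of the generators make this impossible unless all its coefficients vanish
   (F9_gap), which forces (a,b) = (a',b') (F9_rigid). *)

abbreviation K_subspace :: "'a::field fps set \<Rightarrow> bool" where
  "K_subspace M \<equiv> is_submodule (range fps_const) M"

lemma kspan_Nil: "kspan [] = {0}"
  by (simp add: kspan_def)

lemma kspan_iff: "m \<in> kspan as \<longleftrightarrow> (\<exists>c. m = (\<Sum>i<length as. fps_const (c i) * as ! i))"
  unfolding kspan_def by blast

lemma kspan_Cons:
  "m \<in> kspan (a # as) \<longleftrightarrow> (\<exists>c m'. m' \<in> kspan as \<and> m = fps_const c * a + m')"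
proof
  assume "m \<in> kspan (a # as)"
  then obtain c where "m = (\<Sum>i<length (a # as). fps_const (c i) * (a # as) ! i)"
    unfolding kspan_iff by blast
  then have "m = fps_const (c 0) * a + (\<Sum>i<length as. fps_const (c (Suc i)) * as ! i)"
    by (simp only: length_Cons sum.lessThan_Suc_shift nth_Cons_0 nth_Cons_Suc)
  moreover have "(\<Sum>i<length as. fps_const (c (Suc i)) * as ! i) \<in> kspan as"
    unfolding kspan_iff by (intro exI[of _ "\<lambda>i. c (Suc i)"]) (rule refl)
  ultimately show "\<exists>c m'. m' \<in> kspan as \<and> m = fps_const c * a + m'" by blast
next
  assume "\<exists>c m'. m' \<in> kspan as \<and> m = fps_const c * a + m'"
  then obtain c0 c where "m = fps_const c0 * a + (\<Sum>i<length as. fps_const (c i) * as ! i)"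
    unfolding kspan_iff by blast
  then have "m = (\<Sum>i<length (a # as). fps_const (case_nat c0 c i) * (a # as) ! i)"
    by (simp only: length_Cons sum.lessThan_Suc_shift nth_Cons_0 nth_Cons_Suc nat.case)
  then show "m \<in> kspan (a # as)"
    unfolding kspan_iff by (intro exI[of _ "case_nat c0 c"])
qed

lemma kspan_add:
  assumes "m \<in> kspan as" "m' \<in> kspan as"
  shows "m + m' \<in> kspan as"
proof -
  obtain c c' where "m = (\<Sum>i<length as. fps_const (c i) * as ! i)"
    and "m' = (\<Sum>i<length as. fps_const (c' i) * as ! i)"
    using assms unfolding kspan_iff by blast
  then have "m + m' = (\<Sum>i<length as. fps_const (c i + c' i) * as ! i)"
    by (simp add: distrib_right sum.distrib flip: fps_const_add)
  then show ?thesis unfolding kspan_iff by (intro exI[of _ "\<lambda>i. c i + c' i"])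
qed

lemma kspan_scale:
  assumes "m \<in> kspan as"
  shows "fps_const d * m \<in> kspan as"
proof -
  obtain c where "m = (\<Sum>i<length as. fps_const (c i) * as ! i)"
    using assms unfolding kspan_iff by blast
  then have "fps_const d * m = (\<Sum>i<length as. fps_const (d * c i) * as ! i)"
    by (simp add: sum_distrib_left mult.assoc flip: fps_const_mult)
  then show ?thesis unfolding kspan_iff by (intro exI[of _ "\<lambda>i. d * c i"])
qed

lemma kspan_subspace:
  fixes as :: "'a::field fps list"
  shows "K_subspace (kspan as)"
  unfolding is_submodule_def
proof (intro conjI ballI kspan_add)
  show "0 \<in> kspan as"
    unfolding kspan_iff by (intro exI[of _ "\<lambda>_. 0"]) simp
next
  fix m :: "'a fps" assume "m \<in> kspan as"
  then show "- m \<in> kspan as" using kspan_scale[of m as "- 1"] by (simp flip: fps_const_neg)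
next
  fix s m :: "'a fps" assume "s \<in> range fps_const" "m \<in> kspan as"
  then show "s * m \<in> kspan as" using kspan_scale by blast
qed

lemma generator_in_kspan:
  fixes as :: "'a::field fps list"
  shows "h \<in> set as \<Longrightarrow> h \<in> kspan as"
proof (induction as)
  case Nil
  then show ?case by simp
next
  case (Cons a as)
  have zero: "0 \<in> kspan as" using kspan_subspace by (auto simp: is_submodule_def)
  show ?case
  proof (cases "h = a")
    case True
    then show ?thesis unfolding kspan_Cons
      using zero by (intro exI[of _ 1] exI[of _ 0]) simp
  next
    case False
    then have "h \<in> kspan as" using Cons by simp
    then show ?thesis unfolding kspan_Cons by (intro exI[of _ 0] exI[of _ h]) simp
  qed
qed

lemma tpowR_ideal:
  fixes a r :: "'a::field fps"
  shows "a \<in> tpowR n \<Longrightarrow> r * a \<in> tpowR n"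
  unfolding tpowR_def by (auto simp: mult.left_commute)

lemma tpowR_submodule:
  fixes S :: "'a::field fps set"
  shows "is_submodule S (tpowR n)"
  unfolding is_submodule_def
proof (intro conjI ballI)
  show "0 \<in> tpowR n" unfolding tpowR_def by (intro CollectI exI[of _ 0]) simp
next
  fix a b :: "'a fps" assume "a \<in> tpowR n" "b \<in> tpowR n"
  then show "a + b \<in> tpowR n" unfolding tpowR_def by (auto simp flip: distrib_left)
next
  fix a :: "'a fps" assume "a \<in> tpowR n"
  then show "- a \<in> tpowR n" using tpowR_ideal[of a n "- 1"] by simp
next
  fix s a :: "'a fps" assume "a \<in> tpowR n"
  then show "s * a \<in> tpowR n" by (rule tpowR_ideal)
qed

lemma tpowR_antimono:
  assumes "m \<le> n"
  shows "(tpowR n :: 'a::field fps set) \<subseteq> tpowR m"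
proof
  fix a :: "'a fps" assume "a \<in> tpowR n"
  then obtain r where "a = fps_X ^ m * (fps_X ^ (n - m) * r)"
    using assms unfolding tpowR_def by (auto simp: mult.assoc[symmetric] power_add[symmetric])
  then show "a \<in> tpowR m" unfolding tpowR_def by blast
qed

lemma submodule_closed:
  fixes S M :: "'a::field fps set"
  assumes "is_submodule S M"
  shows "0 \<in> M" "a \<in> M \<Longrightarrow> b \<in> M \<Longrightarrow> a + b \<in> M" "s \<in> S \<Longrightarrow> a \<in> M \<Longrightarrow> s * a \<in> M"
    and "a \<in> M \<Longrightarrow> b \<in> M \<Longrightarrow> a - b \<in> M"
  using assms unfolding is_submodule_def by (metis diff_conv_add_uminus)+

lemma subspace_scale:
  fixes M :: "'a::field fps set"
  assumes "K_subspace M" "a \<in> M"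
  shows "fps_const c * a \<in> M"
  using submodule_closed(3)[OF assms(1) _ assms(2)] by simp

lemma setplus_iff: "m \<in> setplus A B \<longleftrightarrow> (\<exists>a\<in>A. \<exists>b\<in>B. m = a + b)"
  unfolding setplus_def by blast

lemma setplus_submodule:
  fixes S A B :: "'a::field fps set"
  assumes A: "is_submodule S A" and B: "is_submodule S B"
  shows "is_submodule S (setplus A B)"
  unfolding is_submodule_def
proof (intro conjI ballI)
  show "0 \<in> setplus A B"
    unfolding setplus_iff using submodule_closed(1)[OF A] submodule_closed(1)[OF B] by force
next
  fix m m' assume "m \<in> setplus A B" "m' \<in> setplus A B"
  then obtain a b a' b' where "a \<in> A" "b \<in> B" "a' \<in> A" "b' \<in> B" "m = a + b" "m' = a' + b'"
    unfolding setplus_iff by blast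
  moreover have "m + m' = (a + a') + (b + b')" using calculation by (simp add: add_ac)
  ultimately show "m + m' \<in> setplus A B" unfolding setplus_iff
    using submodule_closed(2)[OF A] submodule_closed(2)[OF B] by blast
next
  fix m assume "m \<in> setplus A B"
  then obtain a b where "a \<in> A" "b \<in> B" "m = a + b" unfolding setplus_iff by blast
  moreover have "- m = - a + - b" using calculation by simp
  ultimately show "- m \<in> setplus A B" unfolding setplus_iff
    using A B unfolding is_submodule_def by blast
next
  fix s m assume "s \<in> S" "m \<in> setplus A B"
  then obtain a b where "a \<in> A" "b \<in> B" "m = a + b" unfolding setplus_iff by blast
  moreover have "s * m = s * a + s * b" using calculation by (simp add: distrib_left)
  ultimately show "s * m \<in> setplus A B" unfolding setplus_iff
    using submodule_closed(3)[OF A \<open>s \<in> S\<close>] submodule_closed(3)[OF B \<open>s \<in> S\<close>] by blast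
qed

definition gen_module :: "'a::field fps list \<Rightarrow> nat \<Rightarrow> 'a fps set" where
  "gen_module hs n = setplus (kspan hs) (tpowR n)"

lemma gen_module_subspace: "K_subspace (gen_module hs n)"
  unfolding gen_module_def by (intro setplus_submodule kspan_subspace tpowR_submodule)

lemma gen_module_decompose:
  assumes "m \<in> gen_module hs n"
  obtains m1 m2 where "m1 \<in> kspan hs" "m2 \<in> tpowR n" "m = m1 + m2"
  using assms unfolding gen_module_def setplus_iff by blast

lemma gen_module_generator:
  fixes hs :: "'a::field fps list"
  assumes "h \<in> set hs"
  shows "h \<in> gen_module hs n"
proof -
  have "0 \<in> (tpowR n :: 'a fps set)" using submodule_closed(1)[OF tpowR_submodule] .
  then show ?thesis unfolding gen_module_def setplus_iff
    using generator_in_kspan[OF assms] by force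
qed

lemma gen_module_tpowR:
  fixes hs :: "'a::field fps list"
  shows "tpowR n \<subseteq> gen_module hs n"
proof
  fix b :: "'a fps" assume "b \<in> tpowR n"
  moreover have "0 \<in> kspan hs" using submodule_closed(1)[OF kspan_subspace] .
  ultimately show "b \<in> gen_module hs n" unfolding gen_module_def setplus_iff by force
qed

lemma kspan_mult_closed:
  fixes M :: "'a::field fps set"
  assumes M: "K_subspace M" and "\<forall>h\<in>set hs. g * h \<in> M" and "m \<in> kspan hs"
  shows "g * m \<in> M"
  using assms(2,3)
proof (induction hs arbitrary: m)
  case Nil
  then show ?case using submodule_closed(1)[OF M] by (simp add: kspan_Nil)
next
  case (Cons a as)
  then obtain c m' where "m' \<in> kspan as" "m = fps_const c * a + m'"
    unfolding kspan_Cons by blast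
  moreover have "fps_const c * (g * a) \<in> M" "g * m' \<in> M"
    using Cons calculation(1) subspace_scale[OF M] by auto
  ultimately show ?case
    using submodule_closed(2)[OF M] by (simp add: algebra_simps)
qed

lemma gen_module_submodule:
  fixes gs hs :: "'a::field fps list"
  assumes "n \<le> k" and gen_prod: "\<forall>g\<in>set gs. \<forall>h\<in>set hs. g * h \<in> gen_module hs n"
  shows "is_submodule (gen_module gs k) (gen_module hs n)"
proof -
  let ?M = "gen_module hs n"
  have M: "K_subspace ?M" by (rule gen_module_subspace)
  have tail: "r * b \<in> ?M" if "b \<in> tpowR k" for r b
    using gen_module_tpowR tpowR_antimono[OF \<open>n \<le> k\<close>] tpowR_ideal that by blast
  have gen_M: "g * a \<in> ?M" if "g \<in> set gs" "a \<in> ?M" for g a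
  proof -
    obtain a1 a2 where "a1 \<in> kspan hs" "a2 \<in> tpowR n" "a = a1 + a2"
      using gen_module_decompose[OF \<open>a \<in> ?M\<close>] .
    moreover have "g * a1 \<in> ?M" using kspan_mult_closed[OF M] gen_prod that calculation(1) by blast
    moreover have "g * a2 \<in> ?M" using gen_module_tpowR tpowR_ideal calculation(2) by blast
    ultimately show ?thesis using submodule_closed(2)[OF M] by (simp add: distrib_left)
  qed
  have "s * a \<in> ?M" if "s \<in> gen_module gs k" "a \<in> ?M" for s a
  proof -
    obtain s1 s2 where "s1 \<in> kspan gs" "s2 \<in> tpowR k" "s = s1 + s2"
      using gen_module_decompose[OF \<open>s \<in> gen_module gs k\<close>] .
    moreover have "a * s1 \<in> ?M"
      using kspan_mult_closed[OF M _ calculation(1), of a] gen_M that(2) by (simp add: mult.commute)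
    moreover have "a * s2 \<in> ?M" using tail calculation(2) .
    ultimately show ?thesis using submodule_closed(2)[OF M] by (simp add: algebra_simps)
  qed
  then show ?thesis using M by (simp add: is_submodule_def)
qed

lemma kspan4_iff:
  "m \<in> kspan [a, b, c, d] \<longleftrightarrow>
    (\<exists>c0 c1 c2 c3. m = fps_const c0 * a + fps_const c1 * b + fps_const c2 * c + fps_const c3 * d)"
  by (simp add: kspan_Cons kspan_Nil add.assoc) blast

lemma gen_module4_iff:
  "m \<in> gen_module [a, b, c, d] n \<longleftrightarrow>
    (\<exists>c0 c1 c2 c3 r. m = fps_const c0 * a + fps_const c1 * b + fps_const c2 * c + fps_const c3 * d + fps_X ^ n * r)"
  unfolding gen_module_def setplus_iff tpowR_def Bex_def kspan4_iff mem_Collect_eq by blast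

(* If t^k R lies in S and 1 lies in M, every S-linear map on M is multiplication by phi(1):
   t^k phi(m) = phi(t^k m * 1) = t^k m phi(1), and t^k can be cancelled in the domain R. *)
lemma S_linear_is_multiplication:
  fixes \<phi> :: "'a::field fps \<Rightarrow> 'a fps"
  assumes "tpowR k \<subseteq> S" "1 \<in> M" and linear: "\<forall>s\<in>S. \<forall>a\<in>M. \<phi> (s * a) = s * \<phi> a"
    and "m \<in> M"
  shows "\<phi> m = m * \<phi> 1"
proof -
  have "fps_X ^ k * m \<in> S" "fps_X ^ k \<in> S"
    using assms(1) unfolding tpowR_def by (auto intro: exI[of _ 1])
  then have "\<phi> (fps_X ^ k * m * 1) = fps_X ^ k * m * \<phi> 1" "\<phi> (fps_X ^ k * m) = fps_X ^ k * \<phi> m"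
    using linear \<open>1 \<in> M\<close> \<open>m \<in> M\<close> by blast+
  then have "fps_X ^ k * \<phi> m = fps_X ^ k * (m * \<phi> 1)"
    by (simp add: mult.assoc)
  then show ?thesis by simp
qed

(* Hence an S-isomorphism M -> N (with 1 in both) is multiplication by a unit u of R,
   u being invertible because some m0 in M is sent to 1. *)
lemma iso_is_multiplication_by_unit:
  fixes S M N :: "'a::field fps set"
  assumes iso: "module_iso S M N" and "tpowR k \<subseteq> S" "1 \<in> M" "1 \<in> N"
  shows "\<exists>u. u $ 0 \<noteq> 0 \<and> u \<in> N \<and> (\<forall>m\<in>M. m * u \<in> N)"
proof -
  obtain \<phi> where bij: "bij_betw \<phi> M N" and linear: "\<forall>s\<in>S. \<forall>a\<in>M. \<phi> (s * a) = s * \<phi> a"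
    using iso unfolding module_iso_def by blast
  have mult: "\<phi> m = m * \<phi> 1" if "m \<in> M" for m
    using S_linear_is_multiplication[OF assms(2,3) linear that] .
  have "1 \<in> \<phi> ` M" using bij \<open>1 \<in> N\<close> by (simp add: bij_betw_def)
  then obtain m0 where "m0 \<in> M" "\<phi> m0 = 1" by (metis imageE)
  then have "(m0 * \<phi> 1) $ 0 = 1" using mult by simp
  then have "\<phi> 1 $ 0 \<noteq> 0" by auto
  moreover have "m * \<phi> 1 \<in> N" if "m \<in> M" for m
    using mult[OF that] bij_betwE[OF bij] that by metis
  moreover have "\<phi> 1 \<in> N" using bij_betwE[OF bij] \<open>1 \<in> M\<close> by blast
  ultimately show ?thesis by blast
qed

definition gen9 :: "'a::field fps \<Rightarrow> 'a \<Rightarrow> 'a \<Rightarrow> 'a fps" where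
  "gen9 z \<alpha> \<beta> = z + fps_const \<alpha> * fps_X * z ^ 2 + fps_const \<beta> * z ^ 3"

lemma F9_gen_module: "F9 x y z \<alpha> \<beta> = gen_module [1, gen9 z \<alpha> \<beta>, x, y] 10"
  unfolding F9_def gen9_def gen_module_def ..

lemma S2_gen_module: "S2 x y = gen_module [1, x, y, x ^ 2, fps_X * x ^ 2] 13"
  unfolding S2_def gen_module_def ..

lemma gen9_normal_form:
  fixes c :: "'a::field fps"
  shows "gen9 (fps_X ^ 3 * c) \<alpha> \<beta>
    = fps_X ^ 3 * c + fps_const \<alpha> * (fps_X ^ 7 * c ^ 2) + fps_const \<beta> * (fps_X ^ 9 * c ^ 3)"
  unfolding gen9_def by (simp add: power_mult_distrib mult_ac flip: power_add power_mult power_Suc)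

(* The key valuation argument: the generators of F9 have orders 0,3,5,8 with unit leading
   coefficients, so no nonzero combination of t^6 c^2, t^7 c^2, t^9 c^3 lies in F9. *)
lemma F9_gap:
  fixes c :: "'a::field fps"
  assumes c0: "c $ 0 \<noteq> 0"
    and mem: "fps_const e6 * (fps_X ^ 6 * c ^ 2) + fps_const e7 * (fps_X ^ 7 * c ^ 2) + fps_const e9 * (fps_X ^ 9 * c ^ 3)
      \<in> F9 (fps_X ^ 5 * c ^ 2) (fps_X ^ 8 * c ^ 3) (fps_X ^ 3 * c) \<alpha> \<beta>"
  shows "e6 = 0 \<and> e7 = 0 \<and> e9 = 0"
proof -
  obtain d0 d3 d5 d8 r where eq:
    "fps_const e6 * (fps_X ^ 6 * c ^ 2) + fps_const e7 * (fps_X ^ 7 * c ^ 2) + fps_const e9 * (fps_X ^ 9 * c ^ 3)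
     = fps_const d0 + fps_const d3 * (fps_X ^ 3 * c + fps_const \<alpha> * (fps_X ^ 7 * c ^ 2) + fps_const \<beta> * (fps_X ^ 9 * c ^ 3))
       + fps_const d5 * (fps_X ^ 5 * c ^ 2) + fps_const d8 * (fps_X ^ 8 * c ^ 3) + fps_X ^ 10 * r"
    using mem unfolding F9_gen_module gen_module4_iff gen9_normal_form by auto
  have coeff: "\<And>n. (fps_const e6 * (fps_X ^ 6 * c ^ 2) + fps_const e7 * (fps_X ^ 7 * c ^ 2) + fps_const e9 * (fps_X ^ 9 * c ^ 3)) $ n
     = (fps_const d0 + fps_const d3 * (fps_X ^ 3 * c + fps_const \<alpha> * (fps_X ^ 7 * c ^ 2) + fps_const \<beta> * (fps_X ^ 9 * c ^ 3))
       + fps_const d5 * (fps_X ^ 5 * c ^ 2) + fps_const d8 * (fps_X ^ 8 * c ^ 3) + fps_X ^ 10 * r) $ n"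
    using eq by simp
  note nth = fps_X_power_mult_nth fps_power_zeroth
  have "d0 = 0" using coeff[of 0] by (simp add: nth)
  moreover have "d3 = 0" using coeff[of 3] c0 calculation by (simp add: nth)
  moreover have "d5 = 0" using coeff[of 5] c0 calculation by (simp add: nth)
  moreover have "e6 = 0" using coeff[of 6] c0 calculation by (simp add: nth)
  moreover have "e7 = 0" using coeff[of 7] c0 calculation by (simp add: nth)
  moreover have "d8 = 0" using coeff[of 8] c0 calculation by (simp add: nth)
  moreover have "e9 = 0" using coeff[of 9] c0 calculation by (simp add: nth)
  ultimately show ?thesis by simp
qed

definition gen9_tail :: "'a::field fps \<Rightarrow> 'a \<Rightarrow> 'a \<Rightarrow> 'a fps" where
  "gen9_tail c \<alpha> \<beta> = fps_const \<alpha> * c ^ 2 + fps_const \<beta> * fps_X ^ 2 * c ^ 3"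

lemma gen9_split:
  fixes c :: "'a::field fps"
  shows "gen9 (fps_X ^ 3 * c) \<alpha> \<beta> = fps_X ^ 3 * c + fps_X ^ 7 * gen9_tail c \<alpha> \<beta>"
  unfolding gen9_normal_form gen9_tail_def by algebra

lemma gen9_products:
  fixes c :: "'a::field fps"
  defines "W \<equiv> gen9 (fps_X ^ 3 * c)" and "p \<equiv> gen9_tail c"
  shows "fps_X ^ 5 * c ^ 2 * W \<alpha> \<beta> = fps_X ^ 8 * c ^ 3 + fps_X ^ 10 * (fps_X ^ 2 * c ^ 2 * p \<alpha> \<beta>)"
    and "fps_X ^ 8 * c ^ 3 * W \<alpha> \<beta> = fps_X ^ 10 * (fps_X * c ^ 4 + fps_X ^ 5 * c ^ 3 * p \<alpha> \<beta>)"
    and "W \<alpha> \<beta> * W \<alpha>' \<beta>' = fps_X ^ 6 * c ^ 2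
           + fps_X ^ 10 * (c * (p \<alpha> \<beta> + p \<alpha>' \<beta>') + fps_X ^ 4 * p \<alpha> \<beta> * p \<alpha>' \<beta>')"
    and "W \<alpha> \<beta> = W \<alpha>' \<beta>' + fps_const (\<alpha> - \<alpha>') * (fps_X ^ 7 * c ^ 2) + fps_const (\<beta> - \<beta>') * (fps_X ^ 9 * c ^ 3)"
proof -
  show "fps_X ^ 5 * c ^ 2 * W \<alpha> \<beta> = fps_X ^ 8 * c ^ 3 + fps_X ^ 10 * (fps_X ^ 2 * c ^ 2 * p \<alpha> \<beta>)"
    "fps_X ^ 8 * c ^ 3 * W \<alpha> \<beta> = fps_X ^ 10 * (fps_X * c ^ 4 + fps_X ^ 5 * c ^ 3 * p \<alpha> \<beta>)"
    "W \<alpha> \<beta> * W \<alpha>' \<beta>' = fps_X ^ 6 * c ^ 2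
       + fps_X ^ 10 * (c * (p \<alpha> \<beta> + p \<alpha>' \<beta>') + fps_X ^ 4 * p \<alpha> \<beta> * p \<alpha>' \<beta>')"
    unfolding W_def p_def gen9_split by algebra+
  show "W \<alpha> \<beta> = W \<alpha>' \<beta>' + fps_const (\<alpha> - \<alpha>') * (fps_X ^ 7 * c ^ 2) + fps_const (\<beta> - \<beta>') * (fps_X ^ 9 * c ^ 3)"
    unfolding W_def gen9_normal_form fps_const_sub[symmetric] by algebra
qed

(* First claim: F9(a,b) is an S2-submodule.  All products of generators either are generators,
   have order >= 10, or (for x*w) differ from the generator y by a multiple of t^10. *)
lemma F9_submodule:
  fixes c x y z :: "'a::field fps"
  assumes x: "x = fps_X ^ 5 * c ^ 2" and y: "y = fps_X ^ 8 * c ^ 3" and z: "z = fps_X ^ 3 * c"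
  shows "is_submodule (S2 x y) (F9 x y z \<alpha> \<beta>)"
proof -
  let ?W = "gen9 z \<alpha> \<beta>"
  let ?M = "gen_module [1, ?W, x, y] 10"
  have gen: "1 \<in> ?M" "?W \<in> ?M" "x \<in> ?M" "y \<in> ?M"
    by (simp_all add: gen_module_generator)
  have high: "r * a \<in> ?M" if "a \<in> tpowR 10" for a r
    using gen_module_tpowR tpowR_ideal[OF that] by blast
  have "x ^ 2 = fps_X ^ 10 * c ^ 4" "x * y = fps_X ^ 10 * (fps_X ^ 3 * c ^ 5)"
    "y * y = fps_X ^ 10 * (fps_X ^ 6 * c ^ 6)"
    unfolding x y by algebra+
  moreover have "y * ?W = fps_X ^ 10 * (fps_X * c ^ 4 + fps_X ^ 5 * c ^ 3 * gen9_tail c \<alpha> \<beta>)"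
    unfolding y z by (rule gen9_products(2))
  ultimately have small: "x ^ 2 \<in> tpowR 10" "x * y \<in> tpowR 10" "y * y \<in> tpowR 10" "y * ?W \<in> tpowR 10"
    unfolding tpowR_def by blast+
  have "x * ?W = y + fps_X ^ 10 * (fps_X ^ 2 * c ^ 2 * gen9_tail c \<alpha> \<beta>)"
    unfolding x y z by (rule gen9_products(1))
  then have xW: "x * ?W \<in> ?M"
    using submodule_closed(2)[OF gen_module_subspace gen(4) high[of _ 1]] by (simp add: tpowR_def)
  have tail: "a * r \<in> ?M" if "a \<in> tpowR 10" for a r
    using high[OF that, of r] by (simp add: mult.commute)
  have products: "g * h \<in> ?M" if g: "g \<in> set [1, x, y, x ^ 2, fps_X * x ^ 2]" and h: "h \<in> set [1, ?W, x, y]"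
    for g h
  proof -
    consider "g = 1" | "h = 1" | "g = x ^ 2" | "g = fps_X * x ^ 2" | "g \<in> {x, y}" "h \<in> {?W, x, y}"
      using g h by auto
    then show ?thesis
    proof cases
      case 1
      then show ?thesis using h gen by auto
    next
      case 2
      then show ?thesis using g gen tail[OF small(1), of 1] high[OF small(1), of fps_X] by auto
    next
      case 3
      then show ?thesis using tail[OF small(1)] by simp
    next
      case 4
      then show ?thesis using tail[OF small(1), of "fps_X * h"] by (simp add: mult_ac)
    next
      case 5
      then show ?thesis using xW tail[OF small(1), of 1] tail[OF small(2), of 1] tail[OF small(3), of 1]
          tail[OF small(4), of 1]
        by (auto simp: power2_eq_square mult.commute)
    qed
  qed
  show ?thesis
    unfolding S2_gen_module F9_gen_module
    by (rule gen_module_submodule) (use products in auto)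
qed

(* It is multiplication by a unit u = C0 + C1 w' + C2 x + C3 y + t^10 h with C0 <> 0, and
   w u  differs from an element of F9(a',b') by  C1 t^6 c^2 + C0(a-a') t^7 c^2 + C0(b-b') t^9 c^3. *)
lemma F9_rigid:
  fixes c x y z :: "'a::field fps"
  assumes x: "x = fps_X ^ 5 * c ^ 2" and y: "y = fps_X ^ 8 * c ^ 3" and z: "z = fps_X ^ 3 * c"
    and c0: "c $ 0 \<noteq> 0"
    and iso: "module_iso (S2 x y) (F9 x y z \<alpha> \<beta>) (F9 x y z \<alpha>' \<beta>')"
  shows "\<alpha> = \<alpha>' \<and> \<beta> = \<beta>'"
proof -
  let ?W = "gen9 z \<alpha> \<beta>" and ?W' = "gen9 z \<alpha>' \<beta>'" and ?N = "F9 x y z \<alpha>' \<beta>'"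
  let ?p = "gen9_tail c \<alpha> \<beta>" and ?p' = "gen9_tail c \<alpha>' \<beta>'"
  have N: "K_subspace ?N" unfolding F9_gen_module by (rule gen_module_subspace)
  have "tpowR 13 \<subseteq> S2 x y" unfolding S2_gen_module by (rule gen_module_tpowR)
  moreover have "1 \<in> F9 x y z \<alpha> \<beta>" "1 \<in> ?N" by (simp_all add: F9_gen_module gen_module_generator)
  ultimately obtain u where "u $ 0 \<noteq> 0" "u \<in> ?N" and u_mult: "\<forall>m\<in>F9 x y z \<alpha> \<beta>. m * u \<in> ?N"
    using iso_is_multiplication_by_unit[OF iso] by blast
  then obtain C0 C1 C2 C3 h where u:
    "u = fps_const C0 * 1 + fps_const C1 * ?W' + fps_const C2 * x + fps_const C3 * y + fps_X ^ 10 * h"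
    unfolding F9_gen_module gen_module4_iff by blast
  have "u $ 0 = C0" unfolding u x y z gen9_normal_form by (simp add: fps_X_power_mult_nth)
  with \<open>u $ 0 \<noteq> 0\<close> have "C0 \<noteq> 0" by simp
  have gens: "?W \<in> F9 x y z \<alpha> \<beta>" "?W' \<in> ?N" "y \<in> ?N" by (simp_all add: F9_gen_module gen_module_generator)
  define Q where "Q = fps_const C1 * (c * (?p + ?p') + fps_X ^ 4 * ?p * ?p')
    + fps_const C2 * (fps_X ^ 2 * c ^ 2 * ?p) + fps_const C3 * (fps_X * c ^ 4 + fps_X ^ 5 * c ^ 3 * ?p) + h * ?W"
  define E where "E = fps_const C1 * (fps_X ^ 6 * c ^ 2) + fps_const (C0 * (\<alpha> - \<alpha>')) * (fps_X ^ 7 * c ^ 2)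
    + fps_const (C0 * (\<beta> - \<beta>')) * (fps_X ^ 9 * c ^ 3)"
  have WW: "?W * ?W' = fps_X ^ 6 * c ^ 2 + fps_X ^ 10 * (c * (?p + ?p') + fps_X ^ 4 * ?p * ?p')"
    unfolding z by (rule gen9_products(3))
  have xW: "x * ?W = y + fps_X ^ 10 * (fps_X ^ 2 * c ^ 2 * ?p)"
    unfolding x y z by (rule gen9_products(1))
  have yW: "y * ?W = fps_X ^ 10 * (fps_X * c ^ 4 + fps_X ^ 5 * c ^ 3 * ?p)"
    unfolding y z by (rule gen9_products(2))
  have W_W': "?W = ?W' + fps_const (\<alpha> - \<alpha>') * (fps_X ^ 7 * c ^ 2) + fps_const (\<beta> - \<beta>') * (fps_X ^ 9 * c ^ 3)"
    unfolding z by (rule gen9_products(4))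
  have "?W * u = fps_const C0 * ?W + fps_const C1 * (?W * ?W') + fps_const C2 * (x * ?W)
      + fps_const C3 * (y * ?W) + fps_X ^ 10 * (h * ?W)"
    unfolding u by (simp add: algebra_simps)
  also have "\<dots> = fps_const C0 * ?W' + fps_const C2 * y + E + fps_X ^ 10 * Q"
    unfolding WW xW yW E_def Q_def fps_const_mult[symmetric] by (subst W_W') algebra
  finally have "E = ?W * u - fps_const C0 * ?W' - fps_const C2 * y - fps_X ^ 10 * Q"
    by (simp add: algebra_simps)
  moreover have "?W * u \<in> ?N" using u_mult gens(1) by blast
  moreover have "fps_X ^ 10 * Q \<in> ?N" unfolding F9_gen_module using gen_module_tpowR tpowR_def by blast
  ultimately have "E \<in> ?N"
    using gens(2,3) subspace_scale[OF N] submodule_closed(4)[OF N] by simp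
  then have "C1 = 0 \<and> C0 * (\<alpha> - \<alpha>') = 0 \<and> C0 * (\<beta> - \<beta>') = 0"
    using F9_gap[OF c0] unfolding E_def x y z by blast
  with \<open>C0 \<noteq> 0\<close> show ?thesis by simp
qed

(* Normal form of the data: z = t^3 c, x = t^5 c^2, y = t^8 c^3 with c a unit.
   From y^2 = t x^3 and y = z x we get z^2 = t x, and orders give ord z = 3. *)
lemma cusp_normal_form:
  fixes x y z :: "'a::field fps"
  assumes "x \<noteq> 0" "y \<noteq> 0" "subdegree y = 8" "y ^ 2 = fps_X * x ^ 3" "z * x = y"
  obtains c where "c $ 0 \<noteq> 0" "x = fps_X ^ 5 * c ^ 2" "y = fps_X ^ 8 * c ^ 3" "z = fps_X ^ 3 * c"
proof -
  have "z \<noteq> 0" using assms by auto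
  have "(z ^ 2 - fps_X * x) * x ^ 2 = 0"
  proof -
    have "(z ^ 2 - fps_X * x) * x ^ 2 = (z * x) ^ 2 - fps_X * x ^ 3" by algebra
    then show ?thesis using assms by simp
  qed
  then have z2: "z ^ 2 = fps_X * x" using \<open>x \<noteq> 0\<close> by simp
  then have "2 * subdegree z = 1 + subdegree x" using \<open>x \<noteq> 0\<close> \<open>z \<noteq> 0\<close>
    by (metis subdegree_fps_X subdegree_mult subdegree_power fps_X_neq_zero)
  moreover have "subdegree z + subdegree x = 8" using assms \<open>z \<noteq> 0\<close> by (metis subdegree_mult)
  ultimately have "subdegree z = 3" by simp
  define c where "c = fps_shift 3 z"
  have z: "z = fps_X ^ 3 * c"
    unfolding c_def using fps_shift_times_fps_X_power[of 3 z] \<open>subdegree z = 3\<close> by (simp add: mult.commute)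
  have "c $ 0 \<noteq> 0" unfolding c_def using \<open>z \<noteq> 0\<close> \<open>subdegree z = 3\<close> nth_subdegree_nonzero[of z] by simp
  have "fps_X * x = fps_X * (fps_X ^ 5 * c ^ 2)" using z2 unfolding z by algebra
  then have x: "x = fps_X ^ 5 * c ^ 2" by simp
  have "y = fps_X ^ 3 * c * (fps_X ^ 5 * c ^ 2)" using assms(5) unfolding x z by simp
  also have "\<dots> = fps_X ^ 8 * c ^ 3" by algebra
  finally have "y = fps_X ^ 8 * c ^ 3" .
  then show ?thesis using that \<open>c $ 0 \<noteq> 0\<close> x z by blast
qed

theorem mainTheorem2:
  fixes x y z :: "'a::alg_closed_field fps"
  assumes "x \<noteq> 0" "subdegree x = 5" "y \<noteq> 0" "subdegree y = 8"
    and "y^2 = fps_X * x^3"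
    and "z * x = y"
  shows "(\<forall>\<alpha> \<beta>. \<alpha> \<noteq> 0 \<longrightarrow> is_submodule (S2 x y) (F9 x y z \<alpha> \<beta>))
    \<and> (\<forall>\<alpha> \<beta> \<alpha>' \<beta>'. \<alpha> \<noteq> 0 \<longrightarrow> \<alpha>' \<noteq> 0 \<longrightarrow>
         module_iso (S2 x y) (F9 x y z \<alpha> \<beta>) (F9 x y z \<alpha>' \<beta>') \<longrightarrow> (\<alpha>, \<beta>) = (\<alpha>', \<beta>'))"
proof -
  obtain c where c0: "c $ 0 \<noteq> 0"
    and x: "x = fps_X ^ 5 * c ^ 2" and y: "y = fps_X ^ 8 * c ^ 3" and z: "z = fps_X ^ 3 * c"
    using cusp_normal_form[of x y z] assms by blast
  show ?thesis
    using F9_submodule[OF x y z] F9_rigid[OF x y z c0] by auto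
qed

end
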